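(* The price of anarchy of CC-MAR is unbounded: there exists an instance having a Nash equilibrium with positive total cost while some strategy profile has total cost $0$ (so the ratio between the worst Nash equilibrium cost and the optimal cost is not bounded by any constant).
   Context: A mixed graph $G=(V,E,A)$ has undirected edges $E\subseteq\binom{V}{2}$ with positive integer weights $w_e$ and arcs $A\subseteq V\times V$. A path is a sequence of pairwise distinct vertices in which consecutive vertices are joined by an edge or by an arc in the forward direction. A CC-MAR instance is $(G,\mathcal{T})$ with $\mathcal{T}$ a multiset of $k$ pairs $(s_i,t_i)$, each connected by some path. A strategy profile $\mathcal{P}=\{P_1,\dots,P_k\}$ consists of $s_i$-$t_i$ paths. For $\{u,v\}\in E$, $x_{uv}$ is the number of paths traversing it from $u$ to $v$. Agent $i$'s cost is $\sum w_{uv}x_{vu}$ over edges $\{u,v\}$ traversed by $P_i$ from $u$ to $v$; total cost is $\mathrm{cost}(\mathcal{P})=\sum_{\{u,v\}\in E}w_{uv}x_{uv}x_{vu}$. A Nash equilibrium is a profile where no agent can strictly lower its own cost by unilaterally changing its path. The price of anarchy is the supremum over instances of the ratio of the maximum total cost of a Nash equilibrium to the minimum total cost of any profile. *)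

theory Defs
  imports Main
begin

text \<open>Mixed graph: vertex set V, undirected edges E (two-element sets),
  edge weights w, arcs A (ordered pairs).\<close>

definition steps :: "'a list \<Rightarrow> ('a \<times> 'a) set" where
  "steps p = set (zip p (tl p))"

definition is_path :: "'a set \<Rightarrow> 'a set set \<Rightarrow> ('a \<times> 'a) set \<Rightarrow> 'a list \<Rightarrow> 'a \<Rightarrow> 'a \<Rightarrow> bool" where
  "is_path V E A p s t \<longleftrightarrow> p \<noteq> [] \<and> distinct p \<and> set p \<subseteq> V \<and> hd p = s \<and> last p = t \<and>
     (\<forall>(u,v) \<in> steps p. {u,v} \<in> E \<or> (u,v) \<in> A)"

definition wf_instance :: "'a set \<Rightarrow> 'a set set \<Rightarrow> ('a set \<Rightarrow> nat) \<Rightarrow> ('a \<times> 'a) set \<Rightarrow> ('a \<times> 'a) list \<Rightarrow> bool" where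
  "wf_instance V E w A T \<longleftrightarrow> finite V \<and>
     E \<subseteq> {e. \<exists>u v. e = {u,v} \<and> u \<noteq> v \<and> u \<in> V \<and> v \<in> V} \<and>
     A \<subseteq> V \<times> V \<and> (\<forall>e\<in>E. w e > 0) \<and>
     (\<forall>(s,t) \<in> set T. \<exists>p. is_path V E A p s t)"

definition is_profile :: "'a set \<Rightarrow> 'a set set \<Rightarrow> ('a \<times> 'a) set \<Rightarrow> ('a \<times> 'a) list \<Rightarrow> 'a list list \<Rightarrow> bool" where
  "is_profile V E A T P \<longleftrightarrow> length P = length T \<and>
     (\<forall>i < length T. is_path V E A (P ! i) (fst (T ! i)) (snd (T ! i)))"

definition xflow :: "'a set set \<Rightarrow> 'a list list \<Rightarrow> 'a \<Rightarrow> 'a \<Rightarrow> nat" where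
  "xflow E P u v = (if {u,v} \<in> E then length (filter (\<lambda>p. (u,v) \<in> steps p) P) else 0)"

definition agent_cost :: "'a set set \<Rightarrow> ('a set \<Rightarrow> nat) \<Rightarrow> 'a list list \<Rightarrow> nat \<Rightarrow> nat" where
  "agent_cost E w P i = (\<Sum>(u,v) \<in> {(u,v). {u,v} \<in> E \<and> (u,v) \<in> steps (P ! i)}. w {u,v} * xflow E P v u)"

definition total_cost :: "'a::linorder set set \<Rightarrow> ('a set \<Rightarrow> nat) \<Rightarrow> 'a list list \<Rightarrow> nat" where
  "total_cost E w P = (\<Sum>(u,v) \<in> {(u,v). {u,v} \<in> E \<and> u < v}. w {u,v} * xflow E P u v * xflow E P v u)"

definition is_NE :: "'a set \<Rightarrow> 'a set set \<Rightarrow> ('a set \<Rightarrow> nat) \<Rightarrow> ('a \<times> 'a) set \<Rightarrow> ('a \<times> 'a) list \<Rightarrow> 'a list list \<Rightarrow> bool" where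
  "is_NE V E w A T P \<longleftrightarrow> is_profile V E A T P \<and>
     (\<forall>i < length T. \<forall>q. is_path V E A q (fst (T ! i)) (snd (T ! i)) \<longrightarrow>
        agent_cost E w P i \<le> agent_cost E w (P[i := q]) i)"

end

theory Submission
  imports Defs
begin

text \<open>Two agents travel \<open>1 \<rightarrow> 2\<close> and \<open>2 \<rightarrow> 1\<close> along the single edge \<open>{1,2}\<close>, so each
  pays for the other's opposite traffic. Vertex \<open>2\<close> can only be entered through that edge,
  while the second agent could detour \<open>2 \<rightarrow> 3 \<rightarrow> 4 \<rightarrow> 1\<close> over the arcs \<open>(2,3)\<close>,
  \<open>(4,1)\<close> and the edge \<open>{3,4}\<close>. Vertex \<open>4\<close> can only be entered from \<open>3\<close>, and a
  third agent going \<open>4 \<rightarrow> 3 \<rightarrow> 5\<close> makes that step cost as much as the direct edge, so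
  nobody can improve: this is an equilibrium of cost \<open>1\<close>. If the third agent takes the
  arc \<open>(4,5)\<close> instead, the detour is free and the total cost is \<open>0\<close>.\<close>

lemma steps_predecessor:
  assumes "x \<in> set p" "x \<noteq> hd p"
  obtains y where "(y, x) \<in> steps p"
proof -
  obtain j where j: "j < length p" "p ! j = x"
    using assms(1) by (auto simp: in_set_conv_nth)
  with assms(2) have "j \<noteq> 0"
    by (cases j) (auto simp: hd_conv_nth)
  with j have "(p ! (j - 1), x) = zip p (tl p) ! (j - 1)" "j - 1 < length (zip p (tl p))"
    by (cases p; auto)+
  then have "(p ! (j - 1), x) \<in> steps p"
    unfolding steps_def by (metis nth_mem)
  then show thesis by (rule that)
qed

lemma steps_fst_in_set: "(u, v) \<in> steps p \<Longrightarrow> u \<in> set p"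
  unfolding steps_def by (auto dest: set_zip_leftD)

lemma is_path_entry:
  assumes "is_path V E A p s t" "x \<in> set p" "x \<noteq> s"
  obtains y where "(y, x) \<in> steps p" "y \<in> set p" "{y, x} \<in> E \<or> (y, x) \<in> A"
proof -
  from assms have "x \<noteq> hd p"
    unfolding is_path_def by simp
  with assms(2) obtain y where y: "(y, x) \<in> steps p"
    by (rule steps_predecessor)
  moreover from y have "y \<in> set p"
    by (rule steps_fst_in_set)
  moreover from assms(1) y have "{y, x} \<in> E \<or> (y, x) \<in> A"
    unfolding is_path_def by auto
  ultimately show thesis by (rule that)
qed

lemma is_path_target_in_set: "is_path V E A p s t \<Longrightarrow> t \<in> set p"
  unfolding is_path_def by auto

lemma xflow_pos:
  assumes "{u, v} \<in> E" "p \<in> set P" "(u, v) \<in> steps p"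
  shows "1 \<le> xflow E P u v"
proof -
  have "p \<in> set (filter (\<lambda>p. (u, v) \<in> steps p) P)"
    using assms(2,3) by simp
  then have "filter (\<lambda>p. (u, v) \<in> steps p) P \<noteq> []"
    by (metis empty_iff empty_set)
  with assms(1) show ?thesis
    unfolding xflow_def by (simp add: Suc_le_eq)
qed

lemma agent_cost_ge_term:
  assumes "{u, v} \<in> E" "(u, v) \<in> steps (P ! i)"
  shows "w {u, v} * xflow E P v u \<le> agent_cost E w P i"
proof -
  have "finite {(u, v). {u, v} \<in> E \<and> (u, v) \<in> steps (P ! i)}"
    by (rule finite_subset[of _ "steps (P ! i)"]) (auto simp: steps_def)
  from member_le_sum[OF _ _ this, of "(u, v)" "\<lambda>(u, v). w {u, v} * xflow E P v u"] assms
  show ?thesis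
    unfolding agent_cost_def by auto
qed

lemma agent_cost_ge_opposing_traffic:
  assumes "{u, v} \<in> E" "(u, v) \<in> steps (P ! i)" "j < length P" "(v, u) \<in> steps (P ! j)"
  shows "w {u, v} \<le> agent_cost E w P i"
proof -
  have "{v, u} \<in> E"
    using assms(1) by (simp add: insert_commute)
  with assms(3,4) have "1 \<le> xflow E P v u"
    by (intro xflow_pos[of _ _ _ "P ! j"]) auto
  then have "w {u, v} \<le> w {u, v} * xflow E P v u"
    by simp
  also have "\<dots> \<le> agent_cost E w P i"
    using assms(1,2) by (rule agent_cost_ge_term)
  finally show ?thesis .
qed

definition "V0 = {1, 2, 3, 4, 5 :: nat}"
definition "E0 = {{1, 2}, {3, 4 :: nat}}"
definition "w0 = (\<lambda>_ :: nat set. 1 :: nat)"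
definition "A0 = {(2, 3), (4, 1), (3, 5), (4, 5 :: nat)}"
definition "T0 = [(1, 2), (2, 1), (4, 5 :: nat)]"
definition "P_eq = [[1, 2], [2, 1], [4, 3, 5 :: nat]]"
definition "P_opt = [[1, 2], [2, 3, 4, 1], [4, 5 :: nat]]"

lemma E0_iff: "{a, b} \<in> E0 \<longleftrightarrow> (a, b) \<in> {(1, 2), (2, 1), (3, 4), (4, 3)}"
  unfolding E0_def by (auto simp: doubleton_eq_iff)

lemma wf_instance0: "wf_instance V0 E0 w0 A0 T0"
proof -
  have "is_path V0 E0 A0 [1, 2] 1 2" "is_path V0 E0 A0 [2, 1] 2 1" "is_path V0 E0 A0 [4, 5] 4 5"
    by (auto simp: is_path_def steps_def V0_def E0_def A0_def)
  then have "\<forall>(s, t) \<in> set T0. \<exists>p. is_path V0 E0 A0 p s t"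
    by (auto simp: T0_def)
  moreover have "{a, b} \<in> {e. \<exists>u v. e = {u, v} \<and> u \<noteq> v \<and> u \<in> V0 \<and> v \<in> V0}"
    if "a \<noteq> b" "a \<in> V0" "b \<in> V0" for a b
    using that by blast
  then have "E0 \<subseteq> {e. \<exists>u v. e = {u, v} \<and> u \<noteq> v \<and> u \<in> V0 \<and> v \<in> V0}"
    by (simp add: E0_def V0_def)
  ultimately show ?thesis
    unfolding wf_instance_def by (simp add: V0_def A0_def w0_def)
qed

lemma is_profile_eq: "is_profile V0 E0 A0 T0 P_eq"
  unfolding is_profile_def
  by (auto simp: less_Suc_eq is_path_def steps_def V0_def E0_def A0_def T0_def P_eq_def)

lemma is_profile_opt: "is_profile V0 E0 A0 T0 P_opt"
  unfolding is_profile_def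
  by (auto simp: less_Suc_eq is_path_def steps_def V0_def E0_def A0_def T0_def P_opt_def)

lemma E0_increasing_pairs: "{(u, v). {u, v} \<in> E0 \<and> u < v} = {(1, 2), (3, 4)}"
  using E0_iff by auto

lemma total_cost_eq: "total_cost E0 w0 P_eq = 1"
  unfolding total_cost_def E0_increasing_pairs
  by (simp add: xflow_def E0_iff steps_def w0_def P_eq_def)

lemma total_cost_opt: "total_cost E0 w0 P_opt = 0"
  unfolding total_cost_def E0_increasing_pairs
  by (simp add: xflow_def E0_iff steps_def w0_def P_opt_def)

lemma agent_cost_eq:
  "agent_cost E0 w0 P_eq 0 = 1" "agent_cost E0 w0 P_eq 1 = 1" "agent_cost E0 w0 P_eq 2 = 0"
proof -
  have "{(u, v). {u, v} \<in> E0 \<and> (u, v) \<in> steps (P_eq ! 0)} = {(1, 2)}"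
    "{(u, v). {u, v} \<in> E0 \<and> (u, v) \<in> steps (P_eq ! 1)} = {(2, 1)}"
    "{(u, v). {u, v} \<in> E0 \<and> (u, v) \<in> steps (P_eq ! 2)} = {(4, 3)}"
    using E0_iff by (auto simp: P_eq_def steps_def)
  then show "agent_cost E0 w0 P_eq 0 = 1" "agent_cost E0 w0 P_eq 1 = 1" "agent_cost E0 w0 P_eq 2 = 0"
    unfolding agent_cost_def by (simp_all add: xflow_def E0_iff P_eq_def steps_def w0_def)
qed

lemma deviation_agent0:
  assumes q: "is_path V0 E0 A0 q 1 2"
  shows "1 \<le> agent_cost E0 w0 (P_eq[0 := q]) 0"
proof -
  from q obtain y where "(y, 2) \<in> steps q" "{y, 2} \<in> E0 \<or> (y, 2) \<in> A0"
    by (rule is_path_entry) (auto intro: is_path_target_in_set[OF q])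
  then have "(1, 2) \<in> steps (P_eq[0 := q] ! 0)"
    by (auto simp: E0_iff A0_def P_eq_def)
  then have "w0 {1, 2} \<le> agent_cost E0 w0 (P_eq[0 := q]) 0"
    by (intro agent_cost_ge_opposing_traffic[where j = 1]) (auto simp: E0_iff P_eq_def steps_def)
  then show ?thesis
    by (simp add: w0_def)
qed

lemma deviation_agent1:
  assumes q: "is_path V0 E0 A0 q 2 1"
  shows "1 \<le> agent_cost E0 w0 (P_eq[1 := q]) 1"
proof -
  from q obtain y where "(y, 1) \<in> steps q" "y \<in> set q" "{y, 1} \<in> E0 \<or> (y, 1) \<in> A0"
    by (rule is_path_entry) (auto intro: is_path_target_in_set[OF q])
  then consider "(2, 1) \<in> steps q" | "4 \<in> set q"
    by (auto simp: E0_iff A0_def)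
  then show ?thesis
  proof cases
    case 1
    then show ?thesis
      using agent_cost_ge_opposing_traffic[of 2 1 E0 "P_eq[1 := q]" 1 0]
      by (simp add: E0_iff w0_def P_eq_def steps_def)
  next
    case 2
    with q obtain z where "(z, 4) \<in> steps q" "{z, 4} \<in> E0 \<or> (z, 4) \<in> A0"
      by (rule is_path_entry) auto
    then have "(3, 4) \<in> steps q"
      by (auto simp: E0_iff A0_def)
    then show ?thesis
      using agent_cost_ge_opposing_traffic[of 3 4 E0 "P_eq[1 := q]" 1 2]
      by (simp add: E0_iff w0_def P_eq_def steps_def)
  qed
qed

lemma is_NE_eq: "is_NE V0 E0 w0 A0 T0 P_eq"
  unfolding is_NE_def
proof (intro conjI is_profile_eq allI impI)
  fix i q
  assume "i < length T0" and q: "is_path V0 E0 A0 q (fst (T0 ! i)) (snd (T0 ! i))"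
  from \<open>i < length T0\<close> consider "i = 0" | "i = 1" | "i = 2"
    by (auto simp: T0_def less_Suc_eq)
  then show "agent_cost E0 w0 P_eq i \<le> agent_cost E0 w0 (P_eq[i := q]) i"
    by cases (use q deviation_agent0 deviation_agent1 agent_cost_eq in \<open>simp_all add: T0_def\<close>)
qed

theorem mainTheorem3:
  shows "\<exists>(V :: nat set) E w A T P Q.
           wf_instance V E w A T \<and>
           is_NE V E w A T P \<and> total_cost E w P > 0 \<and>
           is_profile V E A T Q \<and> total_cost E w Q = 0"
  using wf_instance0 is_NE_eq total_cost_eq is_profile_opt total_cost_opt by fastforce

end
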